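(* Let $(T,f,(\le_h))$ be an ordered merge tree. Then $\mathcal T(\mathcal L((T,f,(\le_h))))=(T,f,(\le_h))$.
   Context: A merge tree $(T,f)$: a finite rooted tree $T$ identified with its topological realisation, with a continuous $f\colon T\to\mathbb{R}\cup\{\infty\}$ strictly increasing towards the root, $f(v)=\infty$ iff $v$ is the root; lowest leaf at height $0$; $L(T)$ is the set of leaves. $T_x$ is the subtree of descendants of $x$; $\mathrm{lca}$ the lowest common ancestor; $\mathrm{anc}_h(x)$ the unique ancestor of $x$ at height $h\ge f(x)$; $\mathbb{L}_h=\{x:f(x)=h\}$. A layer-order is a family $(\le_h)_{h\ge0}$ of total orders on the $\mathbb{L}_h$ that is consistent ($h_1\le h_2$ and $x_1\le_{h_1}x_2$ imply $\mathrm{anc}_{h_2}(x_1)\le_{h_2}\mathrm{anc}_{h_2}(x_2)$); $(T,f,(\le_h))$ is an ordered merge tree. A leaf-order is a total order $\sqsubseteq_L$ on $L(T)$ such that $u_1\sqsubseteq_L u\sqsubseteq_L u_2$ implies $u\in T_{\mathrm{lca}(u_1,u_2)}$; $(T,f,\sqsubseteq_L)$ is a leaf-ordered merge tree. $\mathcal L((T,f,(\le_h)))=(T,f,\sqsubseteq_L)$ with $u_1\sqsubseteq_L u_2$ iff $\mathrm{anc}_h(u_1)\le_h\mathrm{anc}_h(u_2)$ for $h=\max(f(u_1),f(u_2))$. $\mathcal T((T,f,\sqsubseteq_L))=(T,f,(\le_h))$ with $x_1\le_h x_2$ (for $x_1,x_2\in\mathbb{L}_h$) iff $x_1=x_2$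 or $u_1\sqsubseteq_L u_2$ for all leaves $u_1\in T_{x_1}$, $u_2\in T_{x_2}$. *)

theory Defs
  imports Main "HOL-Library.Extended_Real"
begin

text \<open>
Concrete model of the topological realisation of a finite rooted tree with a height
function f (a merge tree).  Since f is continuous and strictly increasing along each edge, every
point in the half-open edge segment from v (inclusive) towards par v (exclusive) is
uniquely determined by its height; so a point of the realisation is a pair (v, h)
with v \<noteq> r and hgt v \<le> h < hgt (par v), or the root point (r, \<infinity>).
\<close>

definition mt_point :: "'v set \<Rightarrow> ('v \<Rightarrow> 'v) \<Rightarrow> 'v \<Rightarrow> ('v \<Rightarrow> ereal) \<Rightarrow> 'v \<times> ereal \<Rightarrow> bool" where
  "mt_point V par r hgt x \<longleftrightarrow> fst x \<in> V \<and>
     ((fst x = r \<and> snd x = \<infinity>) \<or>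
      (fst x \<noteq> r \<and> hgt (fst x) \<le> snd x \<and> snd x < hgt (par (fst x))))"

definition mt_anc_rel :: "('v \<Rightarrow> 'v) \<Rightarrow> 'v \<times> ereal \<Rightarrow> 'v \<times> ereal \<Rightarrow> bool" where
  "mt_anc_rel par x y \<longleftrightarrow> snd x \<le> snd y \<and> (\<exists>n. (par ^^ n) (fst x) = fst y)"

definition mt_subtree :: "'v set \<Rightarrow> ('v \<Rightarrow> 'v) \<Rightarrow> 'v \<Rightarrow> ('v \<Rightarrow> ereal) \<Rightarrow> 'v \<times> ereal \<Rightarrow> ('v \<times> ereal) set" where
  "mt_subtree V par r hgt x = {y. mt_point V par r hgt y \<and> mt_anc_rel par y x}"

definition mt_anc :: "'v set \<Rightarrow> ('v \<Rightarrow> 'v) \<Rightarrow> 'v \<Rightarrow> ('v \<Rightarrow> ereal) \<Rightarrow> ereal \<Rightarrow> 'v \<times> ereal \<Rightarrow> 'v \<times> ereal" where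
  "mt_anc V par r hgt h x = (THE y. mt_point V par r hgt y \<and> mt_anc_rel par x y \<and> snd y = h)"

definition mt_leaves :: "'v set \<Rightarrow> ('v \<Rightarrow> 'v) \<Rightarrow> 'v \<Rightarrow> ('v \<Rightarrow> ereal) \<Rightarrow> ('v \<times> ereal) set" where
  "mt_leaves V par r hgt = {x. mt_point V par r hgt x \<and> mt_subtree V par r hgt x = {x}}"

definition mt_layer :: "'v set \<Rightarrow> ('v \<Rightarrow> 'v) \<Rightarrow> 'v \<Rightarrow> ('v \<Rightarrow> ereal) \<Rightarrow> real \<Rightarrow> ('v \<times> ereal) set" where
  "mt_layer V par r hgt h = {x. mt_point V par r hgt x \<and> snd x = ereal h}"

definition merge_tree :: "'v set \<Rightarrow> ('v \<Rightarrow> 'v) \<Rightarrow> 'v \<Rightarrow> ('v \<Rightarrow> ereal) \<Rightarrow> bool" where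
  "merge_tree V par r hgt \<longleftrightarrow>
     finite V \<and> r \<in> V \<and> hgt r = \<infinity> \<and> par r = r \<and>
     (\<forall>v\<in>V - {r}. par v \<in> V \<and> hgt v \<noteq> -\<infinity> \<and> hgt v < hgt (par v)) \<and>
     (\<forall>v\<in>V. \<exists>n. (par ^^ n) v = r) \<and>
     (\<exists>u\<in>mt_leaves V par r hgt. snd u = 0) \<and>
     (\<forall>u\<in>mt_leaves V par r hgt. 0 \<le> snd u)"

definition layer_order :: "'v set \<Rightarrow> ('v \<Rightarrow> 'v) \<Rightarrow> 'v \<Rightarrow> ('v \<Rightarrow> ereal) \<Rightarrow> (real \<Rightarrow> ('v \<times> ereal) rel) \<Rightarrow> bool" where
  "layer_order V par r hgt R \<longleftrightarrow>
     (\<forall>h\<ge>0. R h \<subseteq> mt_layer V par r hgt h \<times> mt_layer V par r hgt h \<and>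
             linear_order_on (mt_layer V par r hgt h) (R h)) \<and>
     (\<forall>h1 h2 x1 x2. 0 \<le> h1 \<and> h1 \<le> h2 \<and> (x1, x2) \<in> R h1 \<longrightarrow>
        (mt_anc V par r hgt (ereal h2) x1, mt_anc V par r hgt (ereal h2) x2) \<in> R h2)"

definition ordered_merge_tree :: "'v set \<Rightarrow> ('v \<Rightarrow> 'v) \<Rightarrow> 'v \<Rightarrow> ('v \<Rightarrow> ereal) \<Rightarrow> (real \<Rightarrow> ('v \<times> ereal) rel) \<Rightarrow> bool" where
  "ordered_merge_tree V par r hgt R \<longleftrightarrow> merge_tree V par r hgt \<and> layer_order V par r hgt R"

definition leaf_order_of :: "'v set \<Rightarrow> ('v \<Rightarrow> 'v) \<Rightarrow> 'v \<Rightarrow> ('v \<Rightarrow> ereal) \<Rightarrow> (real \<Rightarrow> ('v \<times> ereal) rel) \<Rightarrow> ('v \<times> ereal) rel" where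
  "leaf_order_of V par r hgt R =
     {(u1, u2). u1 \<in> mt_leaves V par r hgt \<and> u2 \<in> mt_leaves V par r hgt \<and>
        (let h = max (snd u1) (snd u2) in
          (mt_anc V par r hgt h u1, mt_anc V par r hgt h u2) \<in> R (real_of_ereal h))}"

definition layer_order_of :: "'v set \<Rightarrow> ('v \<Rightarrow> 'v) \<Rightarrow> 'v \<Rightarrow> ('v \<Rightarrow> ereal) \<Rightarrow> ('v \<times> ereal) rel \<Rightarrow> real \<Rightarrow> ('v \<times> ereal) rel" where
  "layer_order_of V par r hgt S h =
     {(x1, x2). x1 \<in> mt_layer V par r hgt h \<and> x2 \<in> mt_layer V par r hgt h \<and>
        (x1 = x2 \<or>
         (\<forall>u1 \<in> mt_leaves V par r hgt \<inter> mt_subtree V par r hgt x1.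
          \<forall>u2 \<in> mt_leaves V par r hgt \<inter> mt_subtree V par r hgt x2. (u1, u2) \<in> S))}"

end

theory Submission
  imports Defs
begin

text \<open>
Every point x of layer h has a leaf below it, and x is the ancestor at height h of every
leaf below it.  By consistency of the layer-order, comparing two leaves at the height of the
higher one and then passing to their ancestors at height h compares the points above them.
Hence, if all leaves below x1 precede all leaves below x2 in the induced leaf-order, then
x1 is below x2 at h.  Conversely, if x1 is strictly below x2 at h and some leaf below x2
preceded a leaf below x1, the same argument would put x2 below x1, contradicting
antisymmetry; so totality at the height of the two leaves orders them correctly.
\<close>

locale mtree =
  fixes V :: "'v set" and par :: "'v \<Rightarrow> 'v" and r :: 'v and hgt :: "'v \<Rightarrow> ereal"
  assumes merge_tree: "merge_tree V par r hgt"
begin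

abbreviation "point \<equiv> mt_point V par r hgt"
abbreviation "subtree \<equiv> mt_subtree V par r hgt"
abbreviation "anc \<equiv> mt_anc V par r hgt"
abbreviation "leaves \<equiv> mt_leaves V par r hgt"
abbreviation "layer \<equiv> mt_layer V par r hgt"

lemma finite_V: "finite V"
  and hgt_root: "hgt r = \<infinity>"
  and par_root: "par r = r"
  and hgt_less_par: "\<And>v. v \<in> V \<Longrightarrow> v \<noteq> r \<Longrightarrow> hgt v < hgt (par v)"
  and reaches_root: "\<And>v. v \<in> V \<Longrightarrow> \<exists>n. (par ^^ n) v = r"
  and leaf_height_nonneg: "\<And>u. u \<in> leaves \<Longrightarrow> 0 \<le> snd u"
  using merge_tree unfolding merge_tree_def by auto

lemma par_in_V: "v \<in> V \<Longrightarrow> par v \<in> V"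
  using merge_tree par_root unfolding merge_tree_def by (cases "v = r") auto

lemma funpow_par_in_V: "v \<in> V \<Longrightarrow> (par ^^ n) v \<in> V"
  by (induction n) (auto intro: par_in_V)

lemma funpow_par_root: "(par ^^ n) r = r"
  by (induction n) (auto simp: par_root)

lemma hgt_le_par: "v \<in> V \<Longrightarrow> hgt v \<le> hgt (par v)"
  using hgt_less_par par_root by (cases "v = r") (auto intro: less_imp_le)

lemma hgt_le_funpow_par: "v \<in> V \<Longrightarrow> hgt v \<le> hgt ((par ^^ n) v)"
  by (induction n) (auto intro: order_trans hgt_le_par funpow_par_in_V)

lemma hgt_par_le_funpow_par:
  assumes "v \<in> V" "n \<noteq> 0"
  shows "hgt (par v) \<le> hgt ((par ^^ n) v)"
proof -
  obtain m where "n = Suc m" using assms(2) by (cases n) auto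
  then have "(par ^^ n) v = (par ^^ m) (par v)" by (metis funpow_Suc_right comp_apply)
  then show ?thesis using hgt_le_funpow_par[OF par_in_V[OF assms(1)]] by simp
qed

lemma hgt_le_point: "point y \<Longrightarrow> hgt (fst y) \<le> snd y"
  unfolding mt_point_def using hgt_root by auto

lemma point_eq_if_same_height:
  assumes "point y\<^sub>1" "point y\<^sub>2" "snd y\<^sub>1 = snd y\<^sub>2" "(par ^^ n) (fst y\<^sub>1) = fst y\<^sub>2"
  shows "y\<^sub>1 = y\<^sub>2"
proof (cases "fst y\<^sub>1 = r \<or> n = 0")
  case True
  then have "fst y\<^sub>1 = fst y\<^sub>2" using assms(4) funpow_par_root by auto
  then show ?thesis using assms(3) by (simp add: prod_eq_iff)
next
  case False
  have y\<^sub>1: "fst y\<^sub>1 \<in> V" "snd y\<^sub>1 < hgt (par (fst y\<^sub>1))"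
    using assms(1) False unfolding mt_point_def by auto
  have "hgt (par (fst y\<^sub>1)) \<le> hgt ((par ^^ n) (fst y\<^sub>1))"
    using hgt_par_le_funpow_par[OF y\<^sub>1(1)] False by simp
  also have "\<dots> = hgt (fst y\<^sub>2)" using assms(4) by simp
  also have "\<dots> \<le> snd y\<^sub>2" using hgt_le_point[OF assms(2)] .
  finally show ?thesis using y\<^sub>1 assms(3) by simp
qed

lemma mt_anc_rel_refl: "mt_anc_rel par x x"
  unfolding mt_anc_rel_def by (auto intro: exI[of _ 0])

lemma mt_anc_rel_trans: "mt_anc_rel par x y \<Longrightarrow> mt_anc_rel par y z \<Longrightarrow> mt_anc_rel par x z"
  unfolding mt_anc_rel_def by (metis funpow_add o_apply order_trans)

lemma ancestor_unique:
  assumes "point y\<^sub>1" "point y\<^sub>2" "mt_anc_rel par x y\<^sub>1" "mt_anc_rel par x y\<^sub>2" "snd y\<^sub>1 = snd y\<^sub>2"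
  shows "y\<^sub>1 = y\<^sub>2"
proof -
  obtain i j where i: "(par ^^ i) (fst x) = fst y\<^sub>1" and j: "(par ^^ j) (fst x) = fst y\<^sub>2"
    using assms(3,4) unfolding mt_anc_rel_def by auto
  show ?thesis
  proof (cases "i \<le> j")
    case True
    then have "(par ^^ (j - i)) (fst y\<^sub>1) = fst y\<^sub>2"
      using i j by (metis funpow_add le_add_diff_inverse2 o_apply)
    then show ?thesis using point_eq_if_same_height assms by blast
  next
    case False
    then have "(par ^^ (i - j)) (fst y\<^sub>2) = fst y\<^sub>1"
      using i j by (metis funpow_add le_add_diff_inverse2 o_apply nat_le_linear)
    then show ?thesis using point_eq_if_same_height assms by metis
  qed
qed

lemma ancestor_exists:
  assumes "point x" "snd x \<le> ereal k"
  obtains y where "point y" "mt_anc_rel par x y" "snd y = ereal k"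
proof -
  let ?v = "fst x"
  have v: "?v \<in> V" using assms(1) unfolding mt_point_def by auto
  obtain m where m: "(par ^^ m) ?v = r" using reaches_root[OF v] by auto
  \<comment> \<open>Max N indexes the last vertex on the path to the root of height at most k\<close>
  define N where "N = {n. hgt ((par ^^ n) ?v) \<le> ereal k}"
  have "n \<notin> N" if "m \<le> n" for n
  proof -
    have "(par ^^ n) ?v = (par ^^ (n - m)) ((par ^^ m) ?v)"
      using that by (metis funpow_add le_add_diff_inverse2 o_apply)
    then show ?thesis unfolding N_def using m funpow_par_root hgt_root by simp
  qed
  then have "finite N" by (metis finite_nat_set_iff_bounded not_less)
  moreover have "0 \<in> N" unfolding N_def using hgt_le_point[OF assms(1)] assms(2) by auto
  ultimately have n: "Max N \<in> N" "Suc (Max N) \<notin> N"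
    using Max_in Max_ge by (blast, metis Suc_n_not_le_n)
  let ?w = "(par ^^ Max N) ?v"
  have "?w \<in> V" "?w \<noteq> r" using funpow_par_in_V[OF v] n hgt_root unfolding N_def by auto
  then have "point (?w, ereal k)" unfolding mt_point_def using n unfolding N_def by auto
  moreover have "mt_anc_rel par x (?w, ereal k)" unfolding mt_anc_rel_def using assms(2) by auto
  ultimately show thesis using that by simp
qed

lemma mt_anc_ancestor:
  assumes "point x" "snd x \<le> ereal k"
  shows "point (anc (ereal k) x)" "mt_anc_rel par x (anc (ereal k) x)" "snd (anc (ereal k) x) = ereal k"
proof -
  obtain y where y: "point y" "mt_anc_rel par x y" "snd y = ereal k"
    using ancestor_exists[OF assms] .
  have "point (anc (ereal k) x) \<and> mt_anc_rel par x (anc (ereal k) x) \<and> snd (anc (ereal k) x) = ereal k"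
    unfolding mt_anc_def
  proof (rule theI[of _ y])
    fix z assume "point z \<and> mt_anc_rel par x z \<and> snd z = ereal k"
    then show "z = y" using y ancestor_unique[of z y x] by simp
  qed (use y in simp)
  then show "point (anc (ereal k) x)" "mt_anc_rel par x (anc (ereal k) x)" "snd (anc (ereal k) x) = ereal k"
    by auto
qed

lemma mt_anc_eqI:
  assumes "point x" "point y" "mt_anc_rel par x y" "snd y = ereal k"
  shows "anc (ereal k) x = y"
proof -
  have "snd x \<le> ereal k" using assms(3,4) unfolding mt_anc_rel_def by auto
  then show ?thesis using mt_anc_ancestor[OF assms(1)] ancestor_unique assms by metis
qed

lemma mt_anc_mt_anc:
  assumes "point u" "snd u \<le> ereal c" "c \<le> h"
  shows "anc (ereal h) (anc (ereal c) u) = anc (ereal h) u"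
proof -
  let ?p = "anc (ereal c) u"
  let ?q = "anc (ereal h) ?p"
  have p: "point ?p" "mt_anc_rel par u ?p" "snd ?p = ereal c"
    using mt_anc_ancestor[OF assms(1,2)] by auto
  have q: "point ?q" "mt_anc_rel par ?p ?q" "snd ?q = ereal h"
    using mt_anc_ancestor[OF p(1)] p(3) assms(3) by auto
  show ?thesis using mt_anc_eqI[OF assms(1) q(1) mt_anc_rel_trans[OF p(2) q(2)] q(3)] by simp
qed

lemma mt_anc_of_subtree:
  assumes "x \<in> layer h" "u \<in> subtree x"
  shows "anc (ereal h) u = x"
  using assms mt_anc_eqI unfolding mt_layer_def mt_subtree_def by auto

lemma leafI:
  assumes "w \<in> V" "w \<noteq> r"
    and minimal: "\<And>v. v \<in> V \<Longrightarrow> v \<noteq> r \<Longrightarrow> (\<exists>n. (par ^^ n) v = w) \<Longrightarrow> hgt w \<le> hgt v"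
  shows "(w, hgt w) \<in> leaves"
proof -
  have w: "point (w, hgt w)" unfolding mt_point_def using assms(1,2) hgt_less_par by auto
  have "y = (w, hgt w)" if y: "y \<in> subtree (w, hgt w)" for y
  proof -
    obtain n where n: "(par ^^ n) (fst y) = w" and "point y" "snd y \<le> hgt w"
      using y unfolding mt_subtree_def mt_anc_rel_def by auto
    have "fst y \<in> V" "fst y \<noteq> r"
      using \<open>point y\<close> n assms(2) funpow_par_root unfolding mt_point_def by auto
    then have "hgt w \<le> hgt (fst y)" using minimal n by blast
    then have heights: "snd y = hgt w" "hgt (fst y) = hgt w"
      using hgt_le_point[OF \<open>point y\<close>] \<open>snd y \<le> hgt w\<close> by auto
    have "n = 0"
    proof (rule ccontr)
      assume "n \<noteq> 0"
      then have "hgt (par (fst y)) \<le> hgt w"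
        using hgt_par_le_funpow_par[OF \<open>fst y \<in> V\<close>] n by fastforce
      then show False using hgt_less_par[OF \<open>fst y \<in> V\<close> \<open>fst y \<noteq> r\<close>] heights by simp
    qed
    with heights n show ?thesis by (simp add: prod_eq_iff)
  qed
  then show ?thesis unfolding mt_leaves_def mt_subtree_def using w mt_anc_rel_refl by auto
qed

lemma leaf_in_subtree_exists:
  assumes "point x" "snd x \<noteq> \<infinity>"
  obtains u where "u \<in> leaves" "u \<in> subtree x"
proof -
  define S where "S = {v \<in> V - {r}. mt_anc_rel par (v, hgt v) x}"
  have "fst x \<in> S"
    using assms hgt_le_point[OF assms(1)] unfolding S_def mt_point_def mt_anc_rel_def
    by (auto intro: exI[of _ 0])
  moreover have "finite S" unfolding S_def using finite_V by auto
  ultimately obtain w where "is_arg_min hgt (\<lambda>v. v \<in> S) w"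
    using ex_is_arg_min_if_finite[of S hgt] by auto
  then have wS: "w \<in> S" and min: "\<And>v. v \<in> S \<Longrightarrow> hgt w \<le> hgt v"
    unfolding is_arg_min_linorder by auto
  have w: "w \<in> V" "w \<noteq> r" using wS unfolding S_def by auto
  have "(w, hgt w) \<in> leaves"
  proof (rule leafI[OF w])
    fix v assume v: "v \<in> V" "v \<noteq> r" and "\<exists>n. (par ^^ n) v = w"
    then obtain n where n: "(par ^^ n) v = w" by blast
    then have "mt_anc_rel par (v, hgt v) (w, hgt w)"
      unfolding mt_anc_rel_def using hgt_le_funpow_par[OF v(1), of n] by auto
    then have "v \<in> S" using wS v mt_anc_rel_trans unfolding S_def by blast
    then show "hgt w \<le> hgt v" by (rule min)
  qed
  moreover have "(w, hgt w) \<in> subtree x"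
    using wS hgt_less_par unfolding S_def mt_subtree_def mt_point_def by auto
  ultimately show thesis using that by blast
qed

lemma leaf_height_in_subtree:
  assumes "x \<in> layer h" "u \<in> leaves" "u \<in> subtree x"
  obtains a where "snd u = ereal a" "0 \<le> a" "a \<le> h"
proof -
  have "0 \<le> snd u" "snd u \<le> ereal h"
    using assms leaf_height_nonneg unfolding mt_layer_def mt_subtree_def mt_anc_rel_def by auto
  then show thesis using that by (cases "snd u") auto
qed

lemma max_leaf_height_in_subtrees:
  assumes "x\<^sub>1 \<in> layer h" "u\<^sub>1 \<in> leaves" "u\<^sub>1 \<in> subtree x\<^sub>1"
    and "x\<^sub>2 \<in> layer h" "u\<^sub>2 \<in> leaves" "u\<^sub>2 \<in> subtree x\<^sub>2"
  obtains c where "max (snd u\<^sub>1) (snd u\<^sub>2) = ereal c" "snd u\<^sub>1 \<le> ereal c" "snd u\<^sub>2 \<le> ereal c"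
    "0 \<le> c" "c \<le> h"
proof -
  obtain a b where "snd u\<^sub>1 = ereal a" "0 \<le> a" "a \<le> h" "snd u\<^sub>2 = ereal b" "0 \<le> b" "b \<le> h"
    using leaf_height_in_subtree assms by metis
  then show thesis using that[of "max a b"] by auto
qed

lemma leaf_order_of_iff:
  assumes "max (snd u\<^sub>1) (snd u\<^sub>2) = ereal c"
  shows "(u\<^sub>1, u\<^sub>2) \<in> leaf_order_of V par r hgt R \<longleftrightarrow> u\<^sub>1 \<in> leaves \<and> u\<^sub>2 \<in> leaves \<and>
    (anc (ereal c) u\<^sub>1, anc (ereal c) u\<^sub>2) \<in> R c"
  using assms unfolding leaf_order_of_def Let_def by simp

end

locale ordered_mtree = mtree +
  fixes R
  assumes layer_order: "layer_order V par r hgt R"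
begin

lemma R_subset_layer: "0 \<le> h \<Longrightarrow> R h \<subseteq> layer h \<times> layer h"
  and linear_order_on_R: "0 \<le> h \<Longrightarrow> linear_order_on (layer h) (R h)"
  and R_consistent: "0 \<le> h\<^sub>1 \<Longrightarrow> h\<^sub>1 \<le> h\<^sub>2 \<Longrightarrow> (x\<^sub>1, x\<^sub>2) \<in> R h\<^sub>1 \<Longrightarrow>
    (anc (ereal h\<^sub>2) x\<^sub>1, anc (ereal h\<^sub>2) x\<^sub>2) \<in> R h\<^sub>2"
  using layer_order unfolding layer_order_def by blast+

lemma R_refl: "0 \<le> h \<Longrightarrow> x \<in> layer h \<Longrightarrow> (x, x) \<in> R h"
  using linear_order_on_R
  unfolding linear_order_on_def partial_order_on_def preorder_on_def refl_on_def by blast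

lemma R_antisym: "0 \<le> h \<Longrightarrow> (x, y) \<in> R h \<Longrightarrow> (y, x) \<in> R h \<Longrightarrow> x = y"
  using linear_order_on_R unfolding linear_order_on_def partial_order_on_def antisym_def by blast

lemma R_total: "0 \<le> h \<Longrightarrow> x \<in> layer h \<Longrightarrow> y \<in> layer h \<Longrightarrow> x = y \<or> (x, y) \<in> R h \<or> (y, x) \<in> R h"
  using linear_order_on_R unfolding linear_order_on_def total_on_def by blast

lemma R_if_ancestors_R:
  assumes "x\<^sub>1 \<in> layer h" "u\<^sub>1 \<in> subtree x\<^sub>1" "snd u\<^sub>1 \<le> ereal c"
    and "x\<^sub>2 \<in> layer h" "u\<^sub>2 \<in> subtree x\<^sub>2" "snd u\<^sub>2 \<le> ereal c"
    and "0 \<le> c" "c \<le> h" "(anc (ereal c) u\<^sub>1, anc (ereal c) u\<^sub>2) \<in> R c"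
  shows "(x\<^sub>1, x\<^sub>2) \<in> R h"
proof -
  have "(anc (ereal h) (anc (ereal c) u\<^sub>1), anc (ereal h) (anc (ereal c) u\<^sub>2)) \<in> R h"
    using R_consistent assms(7-9) .
  moreover have "point u\<^sub>1" "point u\<^sub>2" using assms(2,5) unfolding mt_subtree_def by auto
  ultimately show ?thesis
    using assms mt_anc_mt_anc mt_anc_of_subtree by metis
qed

lemma layer_order_of_leaf_order_of_subset:
  assumes "0 \<le> h"
  shows "layer_order_of V par r hgt (leaf_order_of V par r hgt R) h \<subseteq> R h"
proof clarify
  fix x\<^sub>1 x\<^sub>2 assume x: "(x\<^sub>1, x\<^sub>2) \<in> layer_order_of V par r hgt (leaf_order_of V par r hgt R) h"
  then have layer: "x\<^sub>1 \<in> layer h" "x\<^sub>2 \<in> layer h" unfolding layer_order_of_def by auto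
  show "(x\<^sub>1, x\<^sub>2) \<in> R h"
  proof (cases "x\<^sub>1 = x\<^sub>2")
    case True
    then show ?thesis using R_refl assms layer by simp
  next
    case False
    have "point x\<^sub>1" "snd x\<^sub>1 \<noteq> \<infinity>" "point x\<^sub>2" "snd x\<^sub>2 \<noteq> \<infinity>"
      using layer unfolding mt_layer_def by auto
    then obtain u\<^sub>1 u\<^sub>2 where u: "u\<^sub>1 \<in> leaves" "u\<^sub>1 \<in> subtree x\<^sub>1" "u\<^sub>2 \<in> leaves" "u\<^sub>2 \<in> subtree x\<^sub>2"
      using leaf_in_subtree_exists by metis
    obtain c where c: "max (snd u\<^sub>1) (snd u\<^sub>2) = ereal c" "snd u\<^sub>1 \<le> ereal c" "snd u\<^sub>2 \<le> ereal c"
      "0 \<le> c" "c \<le> h"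
      using max_leaf_height_in_subtrees[OF layer(1) u(1,2) layer(2) u(3,4)] .
    have "(u\<^sub>1, u\<^sub>2) \<in> leaf_order_of V par r hgt R"
      using x False u unfolding layer_order_of_def by auto
    then have "(anc (ereal c) u\<^sub>1, anc (ereal c) u\<^sub>2) \<in> R c"
      using leaf_order_of_iff[OF c(1)] by simp
    then show ?thesis
      using R_if_ancestors_R[OF layer(1) u(2) c(2) layer(2) u(4) c(3) c(4,5)] by simp
  qed
qed

lemma subset_layer_order_of_leaf_order_of:
  assumes "0 \<le> h"
  shows "R h \<subseteq> layer_order_of V par r hgt (leaf_order_of V par r hgt R) h"
proof clarify
  fix x\<^sub>1 x\<^sub>2 assume x: "(x\<^sub>1, x\<^sub>2) \<in> R h"
  then have layer: "x\<^sub>1 \<in> layer h" "x\<^sub>2 \<in> layer h" using R_subset_layer assms by auto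
  have "(u\<^sub>1, u\<^sub>2) \<in> leaf_order_of V par r hgt R" if "x\<^sub>1 \<noteq> x\<^sub>2"
    and u: "u\<^sub>1 \<in> leaves" "u\<^sub>1 \<in> subtree x\<^sub>1" "u\<^sub>2 \<in> leaves" "u\<^sub>2 \<in> subtree x\<^sub>2" for u\<^sub>1 u\<^sub>2
  proof -
    obtain c where c: "max (snd u\<^sub>1) (snd u\<^sub>2) = ereal c" "snd u\<^sub>1 \<le> ereal c" "snd u\<^sub>2 \<le> ereal c"
      "0 \<le> c" "c \<le> h"
      using max_leaf_height_in_subtrees[OF layer(1) u(1,2) layer(2) u(3,4)] .
    have layer_c: "anc (ereal c) u\<^sub>1 \<in> layer c" "anc (ereal c) u\<^sub>2 \<in> layer c"
      using u c mt_anc_ancestor[of _ c] unfolding mt_layer_def mt_subtree_def by auto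
    have "(anc (ereal c) u\<^sub>2, anc (ereal c) u\<^sub>1) \<notin> R c"
    proof
      assume "(anc (ereal c) u\<^sub>2, anc (ereal c) u\<^sub>1) \<in> R c"
      then have "(x\<^sub>2, x\<^sub>1) \<in> R h"
        using R_if_ancestors_R[OF layer(2) u(4) c(3) layer(1) u(2) c(2) c(4,5)] by simp
      then show False using R_antisym assms x \<open>x\<^sub>1 \<noteq> x\<^sub>2\<close> by blast
    qed
    then have "(anc (ereal c) u\<^sub>1, anc (ereal c) u\<^sub>2) \<in> R c"
      using R_total[OF c(4) layer_c] R_refl[OF c(4) layer_c(1)] by auto
    then show ?thesis using leaf_order_of_iff[OF c(1)] u by simp
  qed
  then show "(x\<^sub>1, x\<^sub>2) \<in> layer_order_of V par r hgt (leaf_order_of V par r hgt R) h"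
    using layer unfolding layer_order_of_def by auto
qed

end

theorem lemma8:
  fixes V :: "'v set" and par :: "'v \<Rightarrow> 'v" and r :: 'v and hgt :: "'v \<Rightarrow> ereal"
    and R :: "real \<Rightarrow> ('v \<times> ereal) rel"
  assumes "ordered_merge_tree V par r hgt R"
  shows "\<forall>h\<ge>0. layer_order_of V par r hgt (leaf_order_of V par r hgt R) h = R h"
proof -
  interpret ordered_mtree V par r hgt R
    using assms unfolding ordered_merge_tree_def by unfold_locales auto
  show ?thesis
    using layer_order_of_leaf_order_of_subset subset_layer_order_of_leaf_order_of by blast
qed

end
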